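(* For every positive integer $n$ and every $d\ge0$, \[ \mathrm{ch}\,\mathrm{Ind}^d1_n=\sum_{\mathbf x\in\mathbf N^n,\ |\mathbf x|=d}p_n(\mathbf x)\,t^{\mathbf x},\qquad \mathrm{ch}\,\mathrm{Ind}^d\mathrm{sgn}_n=\sum_{\mathbf x\in\mathbf N^n,\ |\mathbf x|=d}q_n(\mathbf x)\,t^{\mathbf x}. \]
   Context: $\mathbf N$ is the set of non-negative integers; for $\mathbf x\in\mathbf N^n$, $t^{\mathbf x}=t_1^{x_1}\dotsb t_n^{x_n}$ and $|\mathbf x|=x_1+\dots+x_n$. $S_n$ is regarded as the subgroup of permutation matrices in $\mathrm{GL}_n(\mathbf C)$; $1_n$ and $\mathrm{sgn}_n$ are its trivial and sign representations. $M_n$ is the space of $n\times n$ complex matrices and $P^d(M_n)$ the space of homogeneous polynomials of degree $d$ in the entries of $Q\in M_n$. For a representation $(\rho,V)$ of $S_n$, $\mathrm{Ind}^dV=\{f\in P^d(M_n)\otimes V: f(wQ)=\rho(w)f(Q)\ \forall w\in S_n,Q\in M_n\}$ (elements viewed as $V$-valued polynomial functions on $M_n$) with $\mathrm{GL}_n(\mathbf C)$-action $(\mathrm{Ind}^d\rho(g)f)(Q)=f(Qg)$. The character of a polynomial representation $\rho$ of $\mathrm{GL}_n(\mathbf C)$ is $\mathrm{ch}\,\rho(t_1,\dots,t_n)=\mathrm{trace}\,\rho(\mathrm{diag}(t_1,\dots,t_n))$. The functions $p_k,q_k:\mathbf N^n\to\mathbf N$ are defined by $\sum_{\mathbf x}\sum_k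 p_k(\mathbf x)t^{\mathbf x}u^k=\prod_{\mathbf x\in\mathbf N^n}(1-t^{\mathbf x}u)^{-1}$ and $\sum_{\mathbf x}\sum_kq_k(\mathbf x)t^{\mathbf x}u^k=\prod_{\mathbf x\in\mathbf N^n}(1+t^{\mathbf x}u)$; i.e. $p_k(\mathbf x)$ is the number of vector partitions of $\mathbf x$ (unordered decompositions into nonzero vectors of $\mathbf N^n$) with at most $k$ parts, and $q_k(\mathbf x)$ the number of vector partitions of $\mathbf x$ into exactly $k$ or $k-1$ distinct parts. *)

theory Defs
  imports Complex_Main "HOL-Library.Function_Algebras" "HOL-Library.Multiset" "HOL-Combinatorics.Permutations"
begin

text \<open>Matrices in M_n are modelled as functions Q :: nat => nat => complex, of which
only the entries Q i j with i, j < n matter.  Polynomial functions on M_n with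
values in a one-dimensional representation V = C are functions M_n -> complex.\<close>

type_synonym mat = "nat \<Rightarrow> nat \<Rightarrow> complex"

definition fscale :: "complex \<Rightarrow> ('a \<Rightarrow> complex) \<Rightarrow> ('a \<Rightarrow> complex)" where
  "fscale c f = (\<lambda>x. c * f x)"

definition trace_on :: "('a \<Rightarrow> complex) set \<Rightarrow> (('a \<Rightarrow> complex) \<Rightarrow> ('a \<Rightarrow> complex)) \<Rightarrow> complex" where
  "trace_on V T = (let B = (SOME B. B \<subseteq> V \<and> \<not> module.dependent fscale B \<and> module.span fscale B = V)
                   in \<Sum>b\<in>B. module.representation fscale B (T b) b)"

definition matmul :: "nat \<Rightarrow> mat \<Rightarrow> mat \<Rightarrow> mat" where
  "matmul n A B = (\<lambda>i j. \<Sum>k<n. A i k * B k j)"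

definition diagm :: "nat \<Rightarrow> (nat \<Rightarrow> complex) \<Rightarrow> mat" where
  "diagm n t = (\<lambda>i j. if i = j then t i else 0)"

definition permmat :: "(nat \<Rightarrow> nat) \<Rightarrow> mat" where
  "permmat \<sigma> = (\<lambda>i k. if i = \<sigma> k then 1 else 0)"

definition monom_M :: "nat \<Rightarrow> (nat \<Rightarrow> nat \<Rightarrow> nat) \<Rightarrow> mat \<Rightarrow> complex" where
  "monom_M n E = (\<lambda>Q. \<Prod>i<n. \<Prod>j<n. Q i j ^ E i j)"

definition Pd :: "nat \<Rightarrow> nat \<Rightarrow> (mat \<Rightarrow> complex) set" where
  "Pd n d = module.span fscale {monom_M n E | E. (\<Sum>i<n. \<Sum>j<n. E i j) = d}"

definition Ind :: "nat \<Rightarrow> nat \<Rightarrow> ((nat \<Rightarrow> nat) \<Rightarrow> complex) \<Rightarrow> (mat \<Rightarrow> complex) set" where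
  "Ind n d \<rho> = {f \<in> Pd n d. \<forall>\<sigma> Q. \<sigma> permutes {..<n} \<longrightarrow>
                     f (matmul n (permmat \<sigma>) Q) = \<rho> \<sigma> * f Q}"

text \<open>Character of a GL_n-subrepresentation V (with action (g.f)(Q) = f(Qg)) at diag(t).\<close>
definition ch :: "nat \<Rightarrow> (mat \<Rightarrow> complex) set \<Rightarrow> (nat \<Rightarrow> complex) \<Rightarrow> complex" where
  "ch n V t = trace_on V (\<lambda>f Q. f (matmul n Q (diagm n t)))"

definition vecN :: "nat \<Rightarrow> (nat \<Rightarrow> nat) set" where
  "vecN n = {x. \<forall>i\<ge>n. x i = 0}"

definition vecs_deg :: "nat \<Rightarrow> nat \<Rightarrow> (nat \<Rightarrow> nat) set" where
  "vecs_deg n d = {x \<in> vecN n. (\<Sum>i<n. x i) = d}"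

definition tpow :: "nat \<Rightarrow> (nat \<Rightarrow> complex) \<Rightarrow> (nat \<Rightarrow> nat) \<Rightarrow> complex" where
  "tpow n t x = (\<Prod>i<n. t i ^ x i)"

definition pk :: "nat \<Rightarrow> nat \<Rightarrow> (nat \<Rightarrow> nat) \<Rightarrow> nat" where
  "pk n k x = card {M :: (nat \<Rightarrow> nat) multiset.
       (\<forall>v\<in>#M. v \<in> vecN n \<and> v \<noteq> (\<lambda>_. 0)) \<and> (\<lambda>i. \<Sum>v\<in>#M. v i) = x \<and> size M \<le> k}"

definition qk :: "nat \<Rightarrow> nat \<Rightarrow> (nat \<Rightarrow> nat) \<Rightarrow> nat" where
  "qk n k x = card {S :: (nat \<Rightarrow> nat) set. finite S \<and>
       (\<forall>v\<in>S. v \<in> vecN n \<and> v \<noteq> (\<lambda>_. 0)) \<and> (\<lambda>i. \<Sum>v\<in>S. v i) = x \<and>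
       (card S = k \<or> card S + 1 = k)}"

end

theory Submission
  imports Defs "HOL-Computational_Algebra.Polynomial"
begin

text \<open>A polynomial function on M_n is a linear combination of monomials Q^E, indexed by exponent
  matrices E of total degree d.  The permutation matrix of \<sigma> permutes the rows of E, and
  diag t multiplies Q^E by t^x, where x is the vector of column sums of E.  Hence a polynomial
  lies in Ind^d \<rho> iff its coefficients are \<rho>-covariant under row permutations, and
  Ind^d \<rho> has a basis of eigenvectors of diag t given by (signed) orbit sums of monomials.
  For \<rho> trivial the orbits are indexed by the multisets of nonzero rows, i.e. by vector
  partitions of x into at most n parts.  For \<rho> the sign, orbits of matrices with a repeated
  row contribute nothing (a transposition fixes them but has sign -1), and the remaining ones are
  indexed by sets of n distinct rows; dropping a possible zero row gives the partitions of x into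
  n or n - 1 distinct parts.  The character is the sum of the eigenvalues t^x over the basis.\<close>

global_interpretation fs: vector_space "fscale :: complex \<Rightarrow> ('a \<Rightarrow> complex) \<Rightarrow> ('a \<Rightarrow> complex)"
  by unfold_locales (auto simp: fscale_def fun_eq_iff algebra_simps)

section \<open>Traces of diagonalisable operators\<close>

lemma fs_representation_sum_scale:
  assumes "\<not> fs.dependent B" and "A \<subseteq> fs.span B"
  shows "fs.representation B (\<Sum>x\<in>A. fscale (u x) x) b = (\<Sum>x\<in>A. u x * fs.representation B x b)"
proof -
  have "fs.representation B (\<Sum>x\<in>A. fscale (u x) x) b = (\<Sum>x\<in>A. fs.representation B (fscale (u x) x) b)"
    using assms by (subst fs.representation_sum) (auto intro: fs.span_scale)
  also have "\<dots> = (\<Sum>x\<in>A. u x * fs.representation B x b)"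
    using assms by (intro sum.cong refl) (auto simp: fs.representation_scale)
  finally show ?thesis .
qed

lemma fs_representation_change_of_basis:
  assumes indB: "\<not> fs.dependent B" and indC: "\<not> fs.dependent C" and "finite B"
    and span: "fs.span B = fs.span C" and "v \<in> C"
  shows "(\<Sum>b\<in>B. fs.representation B v b * fs.representation C b v) = 1"
proof -
  have "v \<in> fs.span B" and "B \<subseteq> fs.span C"
    using span \<open>v \<in> C\<close> fs.span_superset by auto
  then have v_expansion: "(\<Sum>b\<in>B. fscale (fs.representation B v b) b) = v"
    using fs.sum_representation_eq[OF indB _ \<open>finite B\<close> subset_refl] by auto
  have "(\<Sum>b\<in>B. fs.representation B v b * fs.representation C b v)
      = fs.representation C (\<Sum>b\<in>B. fscale (fs.representation B v b) b) v"
    by (rule fs_representation_sum_scale[OF indC \<open>B \<subseteq> fs.span C\<close>, symmetric])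
  also have "\<dots> = 1"
    using fs.representation_basis[OF indC \<open>v \<in> C\<close>] by (simp only: v_expansion) simp
  finally show ?thesis .
qed

lemma trace_on_eigenbasis:
  fixes T :: "('a \<Rightarrow> complex) \<Rightarrow> ('a \<Rightarrow> complex)"
  assumes lin: "Vector_Spaces.linear fscale fscale T"
    and finC: "finite C" and indC: "\<not> fs.dependent C" and spC: "fs.span C = V"
    and eig: "\<And>v. v \<in> C \<Longrightarrow> T v = fscale (\<mu> v) v"
  shows "trace_on V T = (\<Sum>v\<in>C. \<mu> v)"
proof -
  interpret T: Vector_Spaces.linear fscale fscale T by (fact lin)
  define B where "B = (SOME B. B \<subseteq> V \<and> \<not> fs.dependent B \<and> fs.span B = V)"
  have "\<exists>B. B \<subseteq> V \<and> \<not> fs.dependent B \<and> fs.span B = V"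
    using indC spC fs.span_superset by blast
  then have "B \<subseteq> V \<and> \<not> fs.dependent B \<and> fs.span B = V"
    unfolding B_def by (rule someI_ex)
  then have "B \<subseteq> V" and indB: "\<not> fs.dependent B" and spB: "fs.span B = V"
    by auto
  have finB: "finite B"
    using fs.independent_span_bound[OF finC indB] \<open>B \<subseteq> V\<close> spC by blast
  let ?rB = "fs.representation B" and ?rC = "fs.representation C"
  have C_span_B: "C \<subseteq> fs.span B" and B_span_C: "B \<subseteq> fs.span C"
    using spB spC \<open>B \<subseteq> V\<close> fs.span_superset by auto
  have diag_entry: "?rB (T b) b = (\<Sum>v\<in>C. ?rC b v * \<mu> v * ?rB v b)" if "b \<in> B" for b
  proof -
    have b_expansion: "(\<Sum>v\<in>C. fscale (?rC b v) v) = b"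
      using fs.sum_representation_eq[OF indC _ finC subset_refl] that B_span_C by auto
    have "T b = T (\<Sum>v\<in>C. fscale (?rC b v) v)"
      by (simp only: b_expansion)
    also have "\<dots> = (\<Sum>v\<in>C. fscale (?rC b v * \<mu> v) v)"
      by (simp add: T.sum T.scale eig mult.commute)
    finally show ?thesis
      using fs_representation_sum_scale[OF indB C_span_B] by simp
  qed
  have "trace_on V T = (\<Sum>b\<in>B. ?rB (T b) b)"
    unfolding trace_on_def B_def[symmetric] Let_def ..
  also have "\<dots> = (\<Sum>v\<in>C. \<mu> v * (\<Sum>b\<in>B. ?rB v b * ?rC b v))"
    by (simp add: diag_entry sum_distrib_left sum.swap[of _ B] mult_ac)
  also have "\<dots> = (\<Sum>v\<in>C. \<mu> v)"
    using fs_representation_change_of_basis[OF indB indC finB] spB spC by simp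
  finally show ?thesis .
qed

section \<open>Polynomial functions on matrices and their coefficients\<close>

definition exp_mats :: "nat \<Rightarrow> nat \<Rightarrow> (nat \<Rightarrow> nat \<Rightarrow> nat) set" where
  "exp_mats n d = {E. (\<forall>i j. n \<le> i \<or> n \<le> j \<longrightarrow> E i j = 0) \<and> (\<Sum>i<n. \<Sum>j<n. E i j) = d}"

definition poly_fun :: "nat \<Rightarrow> nat \<Rightarrow> ((nat \<Rightarrow> nat \<Rightarrow> nat) \<Rightarrow> complex) \<Rightarrow> mat \<Rightarrow> complex" where
  "poly_fun n d a = (\<lambda>Q. \<Sum>E\<in>exp_mats n d. a E * monom_M n E Q)"

lemma exp_mats_entry_le:
  assumes "E \<in> exp_mats n d"
  shows "E i j \<le> d"
proof (cases "i < n \<and> j < n")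
  case True
  have "E i j \<le> (\<Sum>j<n. E i j)"
    using True by (intro member_le_sum) auto
  also have "\<dots> \<le> (\<Sum>i<n. \<Sum>j<n. E i j)"
    using True by (intro member_le_sum[where f = "\<lambda>i. \<Sum>j<n. E i j"]) auto
  finally show ?thesis
    using assms by (simp add: exp_mats_def)
next
  case False
  then show ?thesis
    using assms by (auto simp: exp_mats_def)
qed

lemma finite_exp_mats: "finite (exp_mats n d)"
proof -
  let ?extend = "\<lambda>f i j. if i < n \<and> j < n then f (i, j) else (0::nat)"
  have "exp_mats n d \<subseteq> ?extend ` (({..<n} \<times> {..<n}) \<rightarrow>\<^sub>E {..d})"
  proof
    fix E assume E: "E \<in> exp_mats n d"
    let ?f = "restrict (\<lambda>(i, j). E i j) ({..<n} \<times> {..<n})"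
    have "?f \<in> ({..<n} \<times> {..<n}) \<rightarrow>\<^sub>E {..d}"
      using exp_mats_entry_le[OF E] by auto
    moreover have "E = ?extend ?f"
      using E by (auto simp: exp_mats_def fun_eq_iff)
    ultimately show "E \<in> ?extend ` (({..<n} \<times> {..<n}) \<rightarrow>\<^sub>E {..d})"
      by blast
  qed
  then show ?thesis
    by (rule finite_subset) (intro finite_imageI finite_PiE; simp)
qed

lemma sum_digits_less:
  fixes e :: "nat \<Rightarrow> nat"
  assumes "\<forall>k<m. e k < b"
  shows "(\<Sum>k<m. e k * b ^ k) < b ^ m"
  using assms
proof (induction m)
  case 0
  then show ?case by simp
next
  case (Suc m)
  have "(\<Sum>k<Suc m. e k * b ^ k) = (\<Sum>k<m. e k * b ^ k) + e m * b ^ m"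
    by simp
  also have "\<dots> < b ^ m + e m * b ^ m"
    using Suc by simp
  also have "\<dots> = (e m + 1) * b ^ m"
    by simp
  also have "\<dots> \<le> b * b ^ m"
    using Suc.prems by (intro mult_right_mono) auto
  finally show ?case
    by simp
qed

lemma sum_digits_inj:
  fixes e e' :: "nat \<Rightarrow> nat"
  assumes "\<forall>k<m. e k < b" and "\<forall>k<m. e' k < b"
    and "(\<Sum>k<m. e k * b ^ k) = (\<Sum>k<m. e' k * b ^ k)"
  shows "\<forall>k<m. e k = e' k"
  using assms
proof (induction m)
  case 0
  then show ?case by simp
next
  case (Suc m)
  define s where "s = (\<Sum>k<m. e k * b ^ k)"
  define s' where "s' = (\<Sum>k<m. e' k * b ^ k)"
  have s: "s < b ^ m" and s': "s' < b ^ m"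
    unfolding s_def s'_def using Suc.prems by (intro sum_digits_less; simp)+
  have eq: "s + e m * b ^ m = s' + e' m * b ^ m"
    using Suc.prems(3) by (simp add: s_def s'_def)
  have "b ^ m > 0"
    using s by linarith
  then have "(s + e m * b ^ m) div b ^ m = e m" and "(s' + e' m * b ^ m) div b ^ m = e' m"
    using s s' by simp_all
  with eq have "e m = e' m"
    by simp
  with eq have "s = s'"
    by simp
  then have "\<forall>k<m. e k = e' k"
    using Suc.prems by (intro Suc.IH) (auto simp: s_def s'_def)
  with \<open>e m = e' m\<close> show ?case
    by (auto simp: less_Suc_eq)
qed

text \<open>Kronecker substitution Q i j = z ^ (N ^ (n * i + j)) turns a polynomial function into a
  univariate polynomial; for N > d it keeps the monomials of degree d apart.\<close>

definition kronecker_exp :: "nat \<Rightarrow> nat \<Rightarrow> (nat \<Rightarrow> nat \<Rightarrow> nat) \<Rightarrow> nat" where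
  "kronecker_exp n N E = (\<Sum>i<n. (\<Sum>j<n. E i j * N ^ j) * (N ^ n) ^ i)"

lemma monom_M_kronecker:
  "monom_M n E (\<lambda>i j. z ^ (N ^ j * (N ^ n) ^ i)) = z ^ kronecker_exp n N E"
proof -
  have "kronecker_exp n N E = (\<Sum>i<n. \<Sum>j<n. E i j * N ^ j * (N ^ n) ^ i)"
    by (simp add: kronecker_exp_def sum_distrib_right)
  then show ?thesis
    by (simp add: monom_M_def power_sum power_mult[symmetric] mult_ac)
qed

lemma kronecker_exp_inj:
  assumes E: "E \<in> exp_mats n d" and E': "E' \<in> exp_mats n d"
    and eq: "kronecker_exp n (Suc d) E = kronecker_exp n (Suc d) E'"
  shows "E = E'"
proof -
  have "\<forall>i<n. (\<Sum>j<n. E i j * Suc d ^ j) < Suc d ^ n" "\<forall>i<n. (\<Sum>j<n. E' i j * Suc d ^ j) < Suc d ^ n"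
    using exp_mats_entry_le[OF E] exp_mats_entry_le[OF E']
    by (simp_all add: sum_digits_less less_Suc_eq_le)
  from sum_digits_inj[OF this] have rows: "\<forall>i<n. (\<Sum>j<n. E i j * Suc d ^ j) = (\<Sum>j<n. E' i j * Suc d ^ j)"
    using eq by (simp add: kronecker_exp_def)
  have "\<forall>j<n. E i j = E' i j" if "i < n" for i
    using rows that exp_mats_entry_le[OF E] exp_mats_entry_le[OF E']
    by (intro sum_digits_inj[where b = "Suc d"]) (simp_all add: less_Suc_eq_le)
  moreover have "E i j = 0 \<and> E' i j = 0" if "\<not> (i < n \<and> j < n)" for i j
    using E E' that by (auto simp: exp_mats_def not_less)
  ultimately show ?thesis
    by (metis ext)
qed

lemma poly_fun_eq_0_imp_coeff_eq_0:
  assumes "poly_fun n d a = 0" and E: "E \<in> exp_mats n d"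
  shows "a E = 0"
proof -
  define p where "p = (\<Sum>F\<in>exp_mats n d. Polynomial.monom (a F) (kronecker_exp n (Suc d) F))"
  have "poly p z = poly_fun n d a (\<lambda>i j. z ^ (Suc d ^ j * (Suc d ^ n) ^ i))" for z
    by (simp add: p_def poly_sum poly_monom poly_fun_def monom_M_kronecker)
  then have "poly p z = 0" for z
    using assms(1) by simp
  then have "p = 0"
    using poly_all_0_iff_0 by blast
  then have "0 = coeff p (kronecker_exp n (Suc d) E)"
    by simp
  also have "\<dots> = (\<Sum>F\<in>exp_mats n d. if F = E then a F else 0)"
    unfolding p_def coeff_sum coeff_monom
    by (intro sum.cong refl) (use kronecker_exp_inj E in auto)
  also have "\<dots> = a E"
    using E finite_exp_mats by simp
  finally show ?thesis
    by simp
qed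

lemma poly_fun_diff: "poly_fun n d (\<lambda>E. a E - b E) = poly_fun n d a - poly_fun n d b"
  by (simp add: poly_fun_def fun_eq_iff sum_subtractf algebra_simps)

lemma poly_fun_coeff_unique:
  assumes "poly_fun n d a = poly_fun n d b" and "E \<in> exp_mats n d"
  shows "a E = b E"
  using poly_fun_eq_0_imp_coeff_eq_0[of n d "\<lambda>E. a E - b E"] assms
  by (simp add: poly_fun_diff)

lemma poly_fun_cong:
  "(\<And>E. E \<in> exp_mats n d \<Longrightarrow> a E = b E) \<Longrightarrow> poly_fun n d a = poly_fun n d b"
  by (simp add: poly_fun_def)

lemma poly_fun_scale: "poly_fun n d (\<lambda>E. c * a E) = fscale c (poly_fun n d a)"
  by (simp add: poly_fun_def fscale_def fun_eq_iff sum_distrib_left mult_ac)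

lemma poly_fun_add: "poly_fun n d (\<lambda>E. a E + b E) = poly_fun n d a + poly_fun n d b"
  by (simp add: poly_fun_def fun_eq_iff sum.distrib algebra_simps)

lemma sum_fun_apply: "(sum f A) x = (\<Sum>a\<in>A. f a x)"
  by (induction A rule: infinite_finite_induct) auto

lemma poly_fun_sum: "poly_fun n d (\<lambda>E. \<Sum>k\<in>K. a k E) = (\<Sum>k\<in>K. poly_fun n d (a k))"
  by (simp add: poly_fun_def fun_eq_iff sum_fun_apply sum_distrib_right sum.swap[of _ K])

lemma poly_fun_in_Pd: "poly_fun n d a \<in> Pd n d"
proof -
  have "poly_fun n d a = (\<Sum>E\<in>exp_mats n d. fscale (a E) (monom_M n E))"
    by (simp add: poly_fun_def fun_eq_iff fscale_def sum_fun_apply)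
  then show ?thesis
    unfolding Pd_def
    by (simp only:) (intro fs.span_sum fs.span_scale fs.span_base; auto simp: exp_mats_def)
qed

lemma Pd_eq_range_poly_fun: "Pd n d = range (poly_fun n d)"
proof
  have "fs.subspace (range (poly_fun n d))"
    unfolding fs.subspace_def
  proof (intro conjI ballI allI)
    have "poly_fun n d (\<lambda>_. 0) = 0"
      by (simp add: poly_fun_def zero_fun_def)
    then show "0 \<in> range (poly_fun n d)"
      by (metis rangeI)
    show "x + y \<in> range (poly_fun n d)" if "x \<in> range (poly_fun n d)" "y \<in> range (poly_fun n d)" for x y
      using that by (auto simp flip: poly_fun_add)
    show "fscale c x \<in> range (poly_fun n d)" if "x \<in> range (poly_fun n d)" for c x
      using that by (auto simp flip: poly_fun_scale)
  qed
  moreover have "monom_M n E \<in> range (poly_fun n d)" if "(\<Sum>i<n. \<Sum>j<n. E i j) = d" for E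
  proof -
    define E' where "E' = (\<lambda>i j. if i < n \<and> j < n then E i j else 0)"
    have "E' \<in> exp_mats n d"
      using that by (simp add: E'_def exp_mats_def)
    then have "(\<Sum>F\<in>exp_mats n d. (if F = E' then 1 else 0) * monom_M n F Q) = monom_M n E' Q" for Q
      by (subst sum.cong[OF refl, of _ _ "\<lambda>F. if F = E' then monom_M n F Q else 0"])
        (simp_all add: finite_exp_mats)
    then have "poly_fun n d (\<lambda>F. if F = E' then 1 else 0) = monom_M n E'"
      by (simp add: poly_fun_def fun_eq_iff)
    moreover have "monom_M n E' = monom_M n E"
      by (simp add: monom_M_def E'_def fun_eq_iff)
    ultimately show ?thesis
      by (metis rangeI)
  qed
  ultimately show "Pd n d \<subseteq> range (poly_fun n d)"
    unfolding Pd_def by (intro fs.span_minimal) auto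
  show "range (poly_fun n d) \<subseteq> Pd n d"
    using poly_fun_in_Pd by blast
qed

lemma matmul_permmat:
  assumes \<sigma>: "\<sigma> permutes {..<n}" and "i < n"
  shows "matmul n (permmat \<sigma>) Q i j = Q (inv \<sigma> i) j"
proof -
  have "inv \<sigma> i < n"
    using permutes_in_image[OF permutes_inv[OF \<sigma>]] \<open>i < n\<close> by simp
  moreover have "matmul n (permmat \<sigma>) Q i j = (\<Sum>k<n. if k = inv \<sigma> i then Q k j else 0)"
    unfolding matmul_def permmat_def
    by (intro sum.cong refl) (auto simp: permutes_inverses[OF \<sigma>])
  ultimately show ?thesis
    by simp
qed

lemma monom_M_permmat:
  assumes \<sigma>: "\<sigma> permutes {..<n}"
  shows "monom_M n E (matmul n (permmat \<sigma>) Q) = monom_M n (E \<circ> \<sigma>) Q"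
proof -
  have "monom_M n E (matmul n (permmat \<sigma>) Q) = (\<Prod>i<n. \<Prod>j<n. Q (inv \<sigma> i) j ^ E i j)"
    by (simp add: monom_M_def matmul_permmat[OF \<sigma>])
  also have "\<dots> = (\<Prod>k<n. \<Prod>j<n. Q (inv \<sigma> (\<sigma> k)) j ^ E (\<sigma> k) j)"
    by (rule prod.reindex_bij_betw[symmetric]) (rule permutes_imp_bij[OF \<sigma>])
  also have "\<dots> = monom_M n (E \<circ> \<sigma>) Q"
    by (simp add: monom_M_def permutes_inverses[OF \<sigma>])
  finally show ?thesis .
qed

lemma exp_mats_comp_permutes:
  assumes \<sigma>: "\<sigma> permutes {..<n}" and E: "E \<in> exp_mats n d"
  shows "E \<circ> \<sigma> \<in> exp_mats n d"
proof -
  have "(\<Sum>i<n. \<Sum>j<n. E (\<sigma> i) j) = (\<Sum>i<n. \<Sum>j<n. E i j)"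
    by (rule sum.reindex_bij_betw) (rule permutes_imp_bij[OF \<sigma>])
  moreover have "E (\<sigma> i) j = 0" if "n \<le> i \<or> n \<le> j" for i j
    using that E permutes_not_in[OF \<sigma>, of i] by (auto simp: exp_mats_def)
  ultimately show ?thesis
    using E by (simp add: exp_mats_def)
qed

lemma poly_fun_permmat:
  assumes \<sigma>: "\<sigma> permutes {..<n}"
  shows "poly_fun n d a (matmul n (permmat \<sigma>) Q) = poly_fun n d (\<lambda>E. a (E \<circ> inv \<sigma>)) Q"
proof -
  have bij: "bij_betw (\<lambda>E. E \<circ> \<sigma>) (exp_mats n d) (exp_mats n d)"
    by (rule bij_betw_byWitness[where f' = "\<lambda>E. E \<circ> inv \<sigma>"])
      (auto simp: o_assoc[symmetric] permutes_inv_o[OF \<sigma>]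
        intro: exp_mats_comp_permutes[OF \<sigma>] exp_mats_comp_permutes[OF permutes_inv[OF \<sigma>]])
  have "poly_fun n d a (matmul n (permmat \<sigma>) Q)
      = (\<Sum>E\<in>exp_mats n d. a (E \<circ> \<sigma> \<circ> inv \<sigma>) * monom_M n (E \<circ> \<sigma>) Q)"
    by (simp add: poly_fun_def monom_M_permmat[OF \<sigma>] o_assoc[symmetric] permutes_inv_o[OF \<sigma>])
  also have "\<dots> = poly_fun n d (\<lambda>E. a (E \<circ> inv \<sigma>)) Q"
    unfolding poly_fun_def
    by (rule sum.reindex_bij_betw[OF bij, where g = "\<lambda>E. a (E \<circ> inv \<sigma>) * monom_M n E Q"])
  finally show ?thesis .
qed

definition colsum :: "nat \<Rightarrow> (nat \<Rightarrow> nat \<Rightarrow> nat) \<Rightarrow> nat \<Rightarrow> nat" where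
  "colsum n E = (\<lambda>j. \<Sum>i<n. E i j)"

lemma monom_M_diagm:
  "monom_M n E (matmul n Q (diagm n t)) = monom_M n E Q * tpow n t (colsum n E)"
proof -
  have entry: "matmul n Q (diagm n t) i j = Q i j * t j" if "j < n" for i j
  proof -
    have "matmul n Q (diagm n t) i j = (\<Sum>k<n. if k = j then Q i j * t j else 0)"
      unfolding matmul_def diagm_def by (intro sum.cong) auto
    then show ?thesis
      using that by simp
  qed
  have "monom_M n E (matmul n Q (diagm n t)) = (\<Prod>i<n. \<Prod>j<n. Q i j ^ E i j * t j ^ E i j)"
    by (simp add: monom_M_def entry power_mult_distrib)
  also have "\<dots> = monom_M n E Q * (\<Prod>i<n. \<Prod>j<n. t j ^ E i j)"
    by (simp add: monom_M_def prod.distrib)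
  also have "(\<Prod>i<n. \<Prod>j<n. t j ^ E i j) = (\<Prod>j<n. \<Prod>i<n. t j ^ E i j)"
    by (rule prod.swap)
  also have "\<dots> = tpow n t (colsum n E)"
    by (simp add: tpow_def colsum_def power_sum)
  finally show ?thesis .
qed

lemma poly_fun_diagm:
  "poly_fun n d a (matmul n Q (diagm n t)) = poly_fun n d (\<lambda>E. a E * tpow n t (colsum n E)) Q"
  by (simp add: poly_fun_def monom_M_diagm mult_ac)

section \<open>Coefficient bases of the induced representations\<close>

definition row_covariant ::
    "nat \<Rightarrow> nat \<Rightarrow> ((nat \<Rightarrow> nat) \<Rightarrow> complex) \<Rightarrow> ((nat \<Rightarrow> nat \<Rightarrow> nat) \<Rightarrow> complex) \<Rightarrow> bool" where
  "row_covariant n d \<rho> a \<longleftrightarrow>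
     (\<forall>\<sigma>. \<sigma> permutes {..<n} \<longrightarrow> (\<forall>E\<in>exp_mats n d. a (E \<circ> \<sigma>) = \<rho> \<sigma> * a E))"

lemma row_covariant_iff_inv:
  assumes \<rho>_inv: "\<And>\<sigma>. \<sigma> permutes {..<n} \<Longrightarrow> \<rho> (inv \<sigma>) = \<rho> \<sigma>"
  shows "row_covariant n d \<rho> a \<longleftrightarrow>
    (\<forall>\<sigma>. \<sigma> permutes {..<n} \<longrightarrow> (\<forall>E\<in>exp_mats n d. a (E \<circ> inv \<sigma>) = \<rho> \<sigma> * a E))"
    (is "_ \<longleftrightarrow> ?inv_covariant")
proof
  assume cov: "row_covariant n d \<rho> a"
  show ?inv_covariant
  proof (intro allI impI ballI)
    fix \<sigma> E assume \<sigma>: "\<sigma> permutes {..<n}" and "E \<in> exp_mats n d"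
    then have "a (E \<circ> inv \<sigma>) = \<rho> (inv \<sigma>) * a E"
      using cov permutes_inv[OF \<sigma>] by (simp add: row_covariant_def)
    then show "a (E \<circ> inv \<sigma>) = \<rho> \<sigma> * a E"
      by (simp add: \<rho>_inv[OF \<sigma>])
  qed
next
  assume inv_cov: ?inv_covariant
  show "row_covariant n d \<rho> a"
    unfolding row_covariant_def
  proof (intro allI impI ballI)
    fix \<sigma> E assume \<sigma>: "\<sigma> permutes {..<n}" and "E \<in> exp_mats n d"
    then have "a (E \<circ> inv (inv \<sigma>)) = \<rho> (inv \<sigma>) * a E"
      using inv_cov permutes_inv[OF \<sigma>] by blast
    then show "a (E \<circ> \<sigma>) = \<rho> \<sigma> * a E"
      by (simp add: permutes_inv_inv[OF \<sigma>] \<rho>_inv[OF \<sigma>])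
  qed
qed

lemma poly_fun_in_Ind_iff:
  assumes \<rho>_inv: "\<And>\<sigma>. \<sigma> permutes {..<n} \<Longrightarrow> \<rho> (inv \<sigma>) = \<rho> \<sigma>"
  shows "poly_fun n d a \<in> Ind n d \<rho> \<longleftrightarrow> row_covariant n d \<rho> a"
proof -
  have twisted: "(\<forall>Q. poly_fun n d a (matmul n (permmat \<sigma>) Q) = \<rho> \<sigma> * poly_fun n d a Q) \<longleftrightarrow>
      (\<forall>E\<in>exp_mats n d. a (E \<circ> inv \<sigma>) = \<rho> \<sigma> * a E)"
    if "\<sigma> permutes {..<n}" for \<sigma>
  proof -
    have "(\<forall>Q. poly_fun n d a (matmul n (permmat \<sigma>) Q) = \<rho> \<sigma> * poly_fun n d a Q) \<longleftrightarrow>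
        poly_fun n d (\<lambda>E. a (E \<circ> inv \<sigma>)) = poly_fun n d (\<lambda>E. \<rho> \<sigma> * a E)"
      by (simp add: poly_fun_permmat[OF that] poly_fun_scale fscale_def fun_eq_iff)
    also have "\<dots> \<longleftrightarrow> (\<forall>E\<in>exp_mats n d. a (E \<circ> inv \<sigma>) = \<rho> \<sigma> * a E)"
      by (blast intro: poly_fun_cong dest: poly_fun_coeff_unique)
    finally show ?thesis .
  qed
  have "poly_fun n d a \<in> Ind n d \<rho> \<longleftrightarrow>
      (\<forall>\<sigma>. \<sigma> permutes {..<n} \<longrightarrow>
        (\<forall>Q. poly_fun n d a (matmul n (permmat \<sigma>) Q) = \<rho> \<sigma> * poly_fun n d a Q))"
    by (auto simp: Ind_def poly_fun_in_Pd)
  also have "\<dots> \<longleftrightarrow> row_covariant n d \<rho> a"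
    using twisted row_covariant_iff_inv[of n \<rho> d a, OF \<rho>_inv] by blast
  finally show ?thesis .
qed

lemma Ind_subspace: "fs.subspace (Ind n d \<rho>)"
proof -
  have Pd: "fs.subspace (Pd n d)"
    unfolding Pd_def by (rule fs.subspace_span)
  show ?thesis
    unfolding fs.subspace_def
  proof (intro conjI ballI allI)
    show "0 \<in> Ind n d \<rho>"
      using fs.subspace_0[OF Pd] by (simp add: Ind_def)
    show "x + y \<in> Ind n d \<rho>" if "x \<in> Ind n d \<rho>" "y \<in> Ind n d \<rho>" for x y
      using that fs.subspace_add[OF Pd] by (simp add: Ind_def algebra_simps)
    show "fscale c x \<in> Ind n d \<rho>" if "x \<in> Ind n d \<rho>" for c x
      using that fs.subspace_scale[OF Pd] by (simp add: Ind_def fscale_def mult_ac)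
  qed
qed

lemma inj_on_poly_fun_dual:
  assumes e: "\<And>k. k \<in> K \<Longrightarrow> e k \<in> exp_mats n d"
    and dual: "\<And>k j. k \<in> K \<Longrightarrow> j \<in> K \<Longrightarrow> b k (e j) = (if k = j then 1 else 0)"
  shows "inj_on (\<lambda>k. poly_fun n d (b k)) K"
proof
  fix k j assume k: "k \<in> K" and j: "j \<in> K" and "poly_fun n d (b k) = poly_fun n d (b j)"
  then have "b k (e j) = b j (e j)"
    using poly_fun_coeff_unique e[OF j] by blast
  then show "k = j"
    using dual[OF k j] dual[OF j j] by (auto split: if_splits)
qed

lemma independent_poly_fun_dual:
  assumes "finite K"
    and e: "\<And>k. k \<in> K \<Longrightarrow> e k \<in> exp_mats n d"
    and dual: "\<And>k j. k \<in> K \<Longrightarrow> j \<in> K \<Longrightarrow> b k (e j) = (if k = j then 1 else 0)"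
  shows "\<not> fs.dependent ((\<lambda>k. poly_fun n d (b k)) ` K)"
proof
  define c where "c k = poly_fun n d (b k)" for k
  have inj: "inj_on c K"
    unfolding c_def using e dual by (rule inj_on_poly_fun_dual)
  assume "fs.dependent ((\<lambda>k. poly_fun n d (b k)) ` K)"
  then obtain u where u: "\<exists>v\<in>c ` K. u v \<noteq> 0" and sum_0: "(\<Sum>v\<in>c ` K. fscale (u v) v) = 0"
    using fs.dependent_finite[of "c ` K"] \<open>finite K\<close> by (auto simp: c_def[abs_def])
  have "(\<Sum>v\<in>c ` K. fscale (u v) v) = (\<Sum>k\<in>K. fscale (u (c k)) (c k))"
    by (rule sum.reindex[OF inj, unfolded comp_def])
  also have "\<dots> = poly_fun n d (\<lambda>E. \<Sum>k\<in>K. u (c k) * b k E)"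
    by (simp add: poly_fun_sum poly_fun_scale c_def)
  finally have zero: "poly_fun n d (\<lambda>E. \<Sum>k\<in>K. u (c k) * b k E) = 0"
    using sum_0 by simp
  have "u (c j) = 0" if "j \<in> K" for j
  proof -
    have "(\<Sum>k\<in>K. u (c k) * b k (e j)) = 0"
      using poly_fun_eq_0_imp_coeff_eq_0[OF zero e[OF that]] .
    then show ?thesis
      using that \<open>finite K\<close> by (simp add: dual if_distrib cong: if_cong)
  qed
  with u show False
    by blast
qed

lemma linear_diagm_action:
  "Vector_Spaces.linear fscale fscale (\<lambda>f Q. f (matmul n Q (diagm n t)))"
  by unfold_locales (auto simp: fscale_def fun_eq_iff algebra_simps)

lemma span_poly_fun_dual_eq_Ind:
  assumes e: "\<And>k. k \<in> K \<Longrightarrow> e k \<in> exp_mats n d"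
    and \<rho>_inv: "\<And>\<sigma>. \<sigma> permutes {..<n} \<Longrightarrow> \<rho> (inv \<sigma>) = \<rho> \<sigma>"
    and covariant: "\<And>k. k \<in> K \<Longrightarrow> row_covariant n d \<rho> (b k)"
    and expansion: "\<And>a E. row_covariant n d \<rho> a \<Longrightarrow> E \<in> exp_mats n d \<Longrightarrow>
                       a E = (\<Sum>k\<in>K. a (e k) * b k E)"
  shows "fs.span ((\<lambda>k. poly_fun n d (b k)) ` K) = Ind n d \<rho>"
proof
  note Ind_iff = poly_fun_in_Ind_iff[of n \<rho> d, OF \<rho>_inv]
  show "fs.span ((\<lambda>k. poly_fun n d (b k)) ` K) \<subseteq> Ind n d \<rho>"
    using covariant Ind_iff by (intro fs.span_minimal Ind_subspace) auto
  show "Ind n d \<rho> \<subseteq> fs.span ((\<lambda>k. poly_fun n d (b k)) ` K)"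
  proof
    fix f assume f_Ind: "f \<in> Ind n d \<rho>"
    then have "f \<in> Pd n d"
      by (simp add: Ind_def)
    then obtain a where f: "f = poly_fun n d a"
      by (auto simp: Pd_eq_range_poly_fun)
    then have "row_covariant n d \<rho> a"
      using f_Ind Ind_iff by blast
    then have "f = poly_fun n d (\<lambda>E. \<Sum>k\<in>K. a (e k) * b k E)"
      unfolding f using expansion by (blast intro: poly_fun_cong)
    also have "\<dots> = (\<Sum>k\<in>K. fscale (a (e k)) (poly_fun n d (b k)))"
      by (simp add: poly_fun_sum poly_fun_scale)
    finally show "f \<in> fs.span ((\<lambda>k. poly_fun n d (b k)) ` K)"
      by (simp add: fs.span_sum fs.span_scale fs.span_base)
  qed
qed

text \<open>The hypotheses make the polynomials with coefficient functions b k a basis of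
  Ind n d \<rho> consisting of eigenvectors of diag t.\<close>

lemma ch_Ind_eq_sum_eigenvalues:
  fixes K :: "'k set"
  assumes finK: "finite K"
    and e: "\<And>k. k \<in> K \<Longrightarrow> e k \<in> exp_mats n d"
    and dual: "\<And>k j. k \<in> K \<Longrightarrow> j \<in> K \<Longrightarrow> b k (e j) = (if k = j then 1 else 0)"
    and \<rho>_inv: "\<And>\<sigma>. \<sigma> permutes {..<n} \<Longrightarrow> \<rho> (inv \<sigma>) = \<rho> \<sigma>"
    and covariant: "\<And>k. k \<in> K \<Longrightarrow> row_covariant n d \<rho> (b k)"
    and expansion: "\<And>a E. row_covariant n d \<rho> a \<Longrightarrow> E \<in> exp_mats n d \<Longrightarrow>
                       a E = (\<Sum>k\<in>K. a (e k) * b k E)"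
    and eigen: "\<And>k E. k \<in> K \<Longrightarrow> E \<in> exp_mats n d \<Longrightarrow> b k E \<noteq> 0 \<Longrightarrow>
                   tpow n t (colsum n E) = \<mu> k"
  shows "ch n (Ind n d \<rho>) t = (\<Sum>k\<in>K. \<mu> k)"
proof -
  define c where "c k = poly_fun n d (b k)" for k
  have inj: "inj_on c K"
    unfolding c_def using e dual by (rule inj_on_poly_fun_dual)
  have indep: "\<not> fs.dependent (c ` K)"
    unfolding c_def using finK e dual by (rule independent_poly_fun_dual)
  have span: "fs.span (c ` K) = Ind n d \<rho>"
    unfolding c_def using e \<rho>_inv covariant expansion by (rule span_poly_fun_dual_eq_Ind)
  have eigenvector: "(\<lambda>Q. c k (matmul n Q (diagm n t))) = fscale (\<mu> k) (c k)" if "k \<in> K" for k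
  proof -
    have "(\<lambda>Q. c k (matmul n Q (diagm n t))) = poly_fun n d (\<lambda>E. b k E * tpow n t (colsum n E))"
      by (simp add: c_def poly_fun_diagm fun_eq_iff)
    also have "\<dots> = poly_fun n d (\<lambda>E. \<mu> k * b k E)"
    proof (rule poly_fun_cong)
      fix E assume "E \<in> exp_mats n d"
      then show "b k E * tpow n t (colsum n E) = \<mu> k * b k E"
        using eigen[OF that] by (cases "b k E = 0") simp_all
    qed
    finally show ?thesis
      by (simp add: poly_fun_scale c_def)
  qed
  have "ch n (Ind n d \<rho>) t = (\<Sum>v\<in>c ` K. \<mu> (the_inv_into K c v))"
    unfolding ch_def using finK indep span eigenvector
    by (intro trace_on_eigenbasis[OF linear_diagm_action])
      (auto simp: the_inv_into_f_f[OF inj])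
  also have "\<dots> = (\<Sum>k\<in>K. \<mu> k)"
    by (simp add: sum.reindex[OF inj] the_inv_into_f_f[OF inj])
  finally show ?thesis .
qed

definition rows :: "nat \<Rightarrow> (nat \<Rightarrow> nat \<Rightarrow> nat) \<Rightarrow> (nat \<Rightarrow> nat) multiset" where
  "rows n E = image_mset E (mset_set {..<n})"

definition nonzero_rows :: "nat \<Rightarrow> (nat \<Rightarrow> nat \<Rightarrow> nat) \<Rightarrow> (nat \<Rightarrow> nat) multiset" where
  "nonzero_rows n E = filter_mset (\<lambda>v. v \<noteq> (\<lambda>_. 0)) (rows n E)"

definition mset_vsum :: "(nat \<Rightarrow> nat) multiset \<Rightarrow> nat \<Rightarrow> nat" where
  "mset_vsum M = (\<lambda>i. \<Sum>v\<in>#M. v i)"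

lemma size_rows [simp]: "size (rows n E) = n"
  by (simp add: rows_def)

lemma rows_comp_permutes: "\<sigma> permutes {..<n} \<Longrightarrow> rows n (E \<circ> \<sigma>) = rows n E"
  unfolding rows_def by (metis image_mset.compositionality permutes_image_mset)

lemma nonzero_rows_comp_permutes: "\<sigma> permutes {..<n} \<Longrightarrow> nonzero_rows n (E \<circ> \<sigma>) = nonzero_rows n E"
  by (simp add: nonzero_rows_def rows_comp_permutes)

lemma colsum_eq_mset_vsum_rows: "colsum n E = mset_vsum (rows n E)"
  by (simp add: colsum_def mset_vsum_def rows_def fun_eq_iff sum_unfold_sum_mset
      image_mset.compositionality comp_def)

lemma mset_vsum_union: "mset_vsum (A + B) = mset_vsum A + mset_vsum B"
  by (simp add: mset_vsum_def fun_eq_iff)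

lemma mset_vsum_filter_nonzero: "mset_vsum (filter_mset (\<lambda>v. v \<noteq> (\<lambda>_. 0)) M) = mset_vsum M"
proof -
  have "mset_vsum (filter_mset (\<lambda>v. \<not> v \<noteq> (\<lambda>_. 0)) M) = 0"
    by (simp add: mset_vsum_def sum_mset.neutral zero_fun_def)
  then show ?thesis
    using arg_cong[OF multiset_partition[of M "\<lambda>v. v \<noteq> (\<lambda>_. 0)"], of mset_vsum]
    by (simp only: mset_vsum_union) simp
qed

lemma colsum_eq_mset_vsum_nonzero_rows: "colsum n E = mset_vsum (nonzero_rows n E)"
  by (simp add: colsum_eq_mset_vsum_rows nonzero_rows_def mset_vsum_filter_nonzero)

lemma rows_eq_nonzero_rows_plus_zeros:
  "rows n E = nonzero_rows n E + replicate_mset (n - size (nonzero_rows n E)) (\<lambda>_. 0)"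
proof -
  let ?M = "rows n E"
  have split: "?M = filter_mset (\<lambda>v. v \<noteq> (\<lambda>_. 0)) ?M + filter_mset (\<lambda>v. v = (\<lambda>_. 0)) ?M"
    using multiset_partition[of ?M "\<lambda>v. v \<noteq> (\<lambda>_. 0)"] by simp
  have "size ?M = size (filter_mset (\<lambda>v. v \<noteq> (\<lambda>_. 0)) ?M) + size (filter_mset (\<lambda>v. v = (\<lambda>_. 0)) ?M)"
    using arg_cong[OF split, of size] by (simp only: size_union)
  then have "size (filter_mset (\<lambda>v. v = (\<lambda>_. 0)) ?M) = n - size (nonzero_rows n E)"
    by (simp add: nonzero_rows_def)
  then have "filter_mset (\<lambda>v. v = (\<lambda>_. 0)) ?M = replicate_mset (n - size (nonzero_rows n E)) (\<lambda>_. 0)"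
    by (simp add: filter_eq_replicate_mset)
  then show ?thesis
    using split by (simp add: nonzero_rows_def)
qed

lemma rows_eq_imp_permutes:
  assumes E: "E \<in> exp_mats n d" and E': "E' \<in> exp_mats n d" and eq: "rows n E = rows n E'"
  obtains \<sigma> where "\<sigma> permutes {..<n}" and "E' = E \<circ> \<sigma>"
proof -
  obtain \<sigma> where \<sigma>: "\<sigma> permutes {..<n}" and "\<forall>i\<in>{..<n}. E' i = E (\<sigma> i)"
    using image_mset_eq_implies_permutes[of "{..<n}" E' E] eq by (auto simp: rows_def)
  moreover have "E' i = E (\<sigma> i)" if "\<not> i < n" for i
    using that E E' permutes_not_in[OF \<sigma>, of i] by (auto simp: exp_mats_def fun_eq_iff)
  ultimately have "E' = E \<circ> \<sigma>"
    by (auto simp: fun_eq_iff)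
  with \<sigma> show ?thesis
    by (rule that)
qed

lemma nonzero_rows_eq_imp_permutes:
  assumes "E \<in> exp_mats n d" and "E' \<in> exp_mats n d" and "nonzero_rows n E = nonzero_rows n E'"
  obtains \<sigma> where "\<sigma> permutes {..<n}" and "E' = E \<circ> \<sigma>"
proof -
  have "rows n E = rows n E'"
    using assms(3) rows_eq_nonzero_rows_plus_zeros[of n E] rows_eq_nonzero_rows_plus_zeros[of n E']
    by simp
  with assms(1,2) show ?thesis
    using that by (rule rows_eq_imp_permutes)
qed

lemma exp_mats_row_in_vecN: "E \<in> exp_mats n d \<Longrightarrow> E i \<in> vecN n"
  by (auto simp: exp_mats_def vecN_def)

lemma colsum_in_vecs_deg:
  assumes "E \<in> exp_mats n d"
  shows "colsum n E \<in> vecs_deg n d"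
proof -
  have "(\<Sum>j<n. \<Sum>i<n. E i j) = (\<Sum>i<n. \<Sum>j<n. E i j)"
    by (rule sum.swap)
  then show ?thesis
    using assms by (auto simp: vecs_deg_def vecN_def colsum_def exp_mats_def)
qed

definition mat_of_rows :: "nat \<Rightarrow> (nat \<Rightarrow> nat) list \<Rightarrow> nat \<Rightarrow> nat \<Rightarrow> nat" where
  "mat_of_rows n vs = (\<lambda>i j. if i < n \<and> j < n then (vs ! i) j else 0)"

lemma mat_of_rows_row:
  assumes "i < n" and "set vs \<subseteq> vecN n" and "length vs = n"
  shows "mat_of_rows n vs i = vs ! i"
proof -
  have "vs ! i \<in> vecN n"
    using assms nth_mem[of i vs] by auto
  then show ?thesis
    using \<open>i < n\<close> by (auto simp: mat_of_rows_def fun_eq_iff vecN_def)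
qed

lemma rows_mat_of_rows:
  assumes "set vs \<subseteq> vecN n" and "length vs = n"
  shows "rows n (mat_of_rows n vs) = mset vs"
proof -
  have "rows n (mat_of_rows n vs) = mset (map (mat_of_rows n vs) [0..<n])"
    by (simp add: rows_def atLeast0LessThan)
  also have "map (mat_of_rows n vs) [0..<n] = map (\<lambda>i. vs ! i) [0..<n]"
    using mat_of_rows_row[OF _ assms] by auto
  also have "\<dots> = vs"
    using assms(2) map_nth by metis
  finally show ?thesis .
qed

lemma mat_of_rows_in_exp_mats:
  assumes vs: "set vs \<subseteq> vecN n" "length vs = n" and "mset_vsum (mset vs) \<in> vecs_deg n d"
  shows "mat_of_rows n vs \<in> exp_mats n d"
proof -
  have "(\<Sum>i<n. \<Sum>j<n. mat_of_rows n vs i j) = (\<Sum>j<n. \<Sum>i<n. mat_of_rows n vs i j)"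
    by (rule sum.swap)
  also have "\<dots> = (\<Sum>j<n. colsum n (mat_of_rows n vs) j)"
    by (simp add: colsum_def)
  also have "\<dots> = d"
    using assms by (simp add: colsum_eq_mset_vsum_rows rows_mat_of_rows[OF vs] vecs_deg_def)
  finally show ?thesis
    by (auto simp: exp_mats_def mat_of_rows_def)
qed

section \<open>The trivial character\<close>

definition vpart_mset :: "nat \<Rightarrow> nat \<Rightarrow> (nat \<Rightarrow> nat) multiset set" where
  "vpart_mset n d = {M. (\<forall>v\<in>#M. v \<in> vecN n \<and> v \<noteq> (\<lambda>_. 0)) \<and> size M \<le> n \<and> mset_vsum M \<in> vecs_deg n d}"

lemma vpart_mset_eq_image_nonzero_rows: "vpart_mset n d = nonzero_rows n ` exp_mats n d"
proof
  show "nonzero_rows n ` exp_mats n d \<subseteq> vpart_mset n d"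
  proof clarify
    fix E assume E: "E \<in> exp_mats n d"
    have "v \<in> vecN n \<and> v \<noteq> (\<lambda>_. 0)" if "v \<in># nonzero_rows n E" for v
      using that exp_mats_row_in_vecN[OF E] by (auto simp: nonzero_rows_def rows_def)
    moreover have "size (nonzero_rows n E) \<le> n"
      using size_filter_mset_lesseq[of _ "rows n E"] by (simp add: nonzero_rows_def)
    ultimately show "nonzero_rows n E \<in> vpart_mset n d"
      using colsum_in_vecs_deg[OF E] by (simp add: vpart_mset_def colsum_eq_mset_vsum_nonzero_rows)
  qed
  show "vpart_mset n d \<subseteq> nonzero_rows n ` exp_mats n d"
  proof
    fix M assume M: "M \<in> vpart_mset n d"
    obtain vs where vs: "mset vs = M"
      using ex_mset by blast
    define ws where "ws = vs @ replicate (n - length vs) (\<lambda>_. 0::nat)"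
    have len: "length ws = n"
      using M vs by (auto simp: vpart_mset_def ws_def)
    have set: "set ws \<subseteq> vecN n"
      using M vs by (auto simp: ws_def vpart_mset_def vecN_def)
    have "filter_mset (\<lambda>v. v \<noteq> (\<lambda>_. 0)) (replicate_mset k (\<lambda>_. 0)) = {#}" for k
      by (induction k) auto
    moreover have "filter_mset (\<lambda>v. v \<noteq> (\<lambda>_. 0)) M = M"
      using M by (simp add: vpart_mset_def filter_mset_eq_conv)
    ultimately have filter: "filter_mset (\<lambda>v. v \<noteq> (\<lambda>_. 0)) (mset ws) = M"
      using vs by (simp add: ws_def)
    then have "mset_vsum (mset ws) \<in> vecs_deg n d"
      using M mset_vsum_filter_nonzero[of "mset ws"] by (simp add: vpart_mset_def)
    then have "mat_of_rows n ws \<in> exp_mats n d"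
      by (rule mat_of_rows_in_exp_mats[OF set len])
    moreover have "nonzero_rows n (mat_of_rows n ws) = M"
      using filter by (simp add: nonzero_rows_def rows_mat_of_rows[OF set len])
    ultimately show "M \<in> nonzero_rows n ` exp_mats n d"
      by blast
  qed
qed

lemma finite_vpart_mset: "finite (vpart_mset n d)"
  by (simp add: vpart_mset_eq_image_nonzero_rows finite_exp_mats)

lemma invariant_coeff_expansion:
  assumes e: "\<And>M. M \<in> vpart_mset n d \<Longrightarrow> e M \<in> exp_mats n d \<and> nonzero_rows n (e M) = M"
    and a: "row_covariant n d (\<lambda>_. 1) a" and E: "E \<in> exp_mats n d"
  shows "a E = (\<Sum>M\<in>vpart_mset n d. a (e M) * (if nonzero_rows n E = M then 1 else 0))"
proof -
  let ?M = "nonzero_rows n E"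
  have M: "?M \<in> vpart_mset n d"
    using E by (simp add: vpart_mset_eq_image_nonzero_rows)
  define F where "F = e ?M"
  have F: "F \<in> exp_mats n d" "nonzero_rows n F = ?M"
    using e[OF M] by (simp_all add: F_def)
  then obtain \<sigma> where "\<sigma> permutes {..<n}" and "E = F \<circ> \<sigma>"
    using E by (metis nonzero_rows_eq_imp_permutes)
  then have "a E = a F"
    using a F(1) by (simp add: row_covariant_def)
  also have "\<dots> = (\<Sum>M\<in>vpart_mset n d. a (e M) * (if nonzero_rows n E = M then 1 else 0))"
    using M finite_vpart_mset by (simp add: F_def if_distrib cong: if_cong)
  finally show ?thesis .
qed

lemma ch_Ind_trivial:
  "ch n (Ind n d (\<lambda>_. 1)) t = (\<Sum>M\<in>vpart_mset n d. tpow n t (mset_vsum M))"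
proof -
  define e where "e M = (SOME E. E \<in> exp_mats n d \<and> nonzero_rows n E = M)" for M
  have e: "e M \<in> exp_mats n d \<and> nonzero_rows n (e M) = M" if "M \<in> vpart_mset n d" for M
  proof -
    have "\<exists>E. E \<in> exp_mats n d \<and> nonzero_rows n E = M"
      using that by (auto simp: vpart_mset_eq_image_nonzero_rows)
    then show ?thesis
      unfolding e_def by (rule someI_ex)
  qed
  show ?thesis
  proof (rule ch_Ind_eq_sum_eigenvalues[where e = e and b = "\<lambda>M E. if nonzero_rows n E = M then 1 else 0"])
    show "finite (vpart_mset n d)"
      by (rule finite_vpart_mset)
    show "e M \<in> exp_mats n d" if "M \<in> vpart_mset n d" for M
      using e[OF that] ..
    show "(if nonzero_rows n (e M') = M then 1 else 0) = (if M = M' then 1 else 0)"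
      if "M \<in> vpart_mset n d" "M' \<in> vpart_mset n d" for M M'
      using e[OF that(2)] by auto
    show "row_covariant n d (\<lambda>_. 1) (\<lambda>E. if nonzero_rows n E = M then 1 else 0)" for M
      by (simp add: row_covariant_def nonzero_rows_comp_permutes)
    show "tpow n t (colsum n E) = tpow n t (mset_vsum M)"
      if "(if nonzero_rows n E = M then 1 else 0 :: complex) \<noteq> 0" for M E
      using that by (simp add: colsum_eq_mset_vsum_nonzero_rows split: if_splits)
    show "a E = (\<Sum>M\<in>vpart_mset n d. a (e M) * (if nonzero_rows n E = M then 1 else 0))"
      if "row_covariant n d (\<lambda>_. 1) a" "E \<in> exp_mats n d" for a E
      using e that by (rule invariant_coeff_expansion)
  qed simp
qed

section \<open>The sign character\<close>

definition nonzero_row_set :: "nat \<Rightarrow> (nat \<Rightarrow> nat \<Rightarrow> nat) \<Rightarrow> (nat \<Rightarrow> nat) set" where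
  "nonzero_row_set n E = E ` {..<n} - {\<lambda>_. 0}"

definition set_vsum :: "(nat \<Rightarrow> nat) set \<Rightarrow> nat \<Rightarrow> nat" where
  "set_vsum S = (\<lambda>i. \<Sum>v\<in>S. v i)"

definition vpart_set :: "nat \<Rightarrow> nat \<Rightarrow> (nat \<Rightarrow> nat) set set" where
  "vpart_set n d = {S. finite S \<and> (\<forall>v\<in>S. v \<in> vecN n \<and> v \<noteq> (\<lambda>_. 0)) \<and>
     (card S = n \<or> card S + 1 = n) \<and> set_vsum S \<in> vecs_deg n d}"

lemma nonzero_rows_eq_mset_set:
  "inj_on E {..<n} \<Longrightarrow> nonzero_rows n E = mset_set (nonzero_row_set n E)"
  by (simp add: nonzero_rows_def rows_def image_mset_mset_set nonzero_row_set_def set_diff_eq)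

lemma colsum_eq_set_vsum:
  assumes "inj_on E {..<n}"
  shows "colsum n E = set_vsum (nonzero_row_set n E)"
  using assms
  by (simp add: colsum_eq_mset_vsum_nonzero_rows nonzero_rows_eq_mset_set mset_vsum_def
      set_vsum_def nonzero_row_set_def sum_unfold_sum_mset)

lemma nonzero_row_set_comp_permutes:
  assumes "\<sigma> permutes {..<n}"
  shows "nonzero_row_set n (E \<circ> \<sigma>) = nonzero_row_set n E"
proof -
  have "(E \<circ> \<sigma>) ` {..<n} = E ` {..<n}"
    using image_comp[of E \<sigma> "{..<n}"] permutes_image[OF assms] by metis
  then show ?thesis
    unfolding nonzero_row_set_def by (simp only:)
qed

lemma inj_on_comp_permutes_iff:
  "\<sigma> permutes {..<n} \<Longrightarrow> inj_on (E \<circ> \<sigma>) {..<n} \<longleftrightarrow> inj_on E {..<n}"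
  by (simp add: comp_inj_on_iff[symmetric] permutes_inj_on permutes_image)

lemma colsum_comp_permutes: "\<sigma> permutes {..<n} \<Longrightarrow> colsum n (E \<circ> \<sigma>) = colsum n E"
  by (simp add: colsum_eq_mset_vsum_rows rows_comp_permutes)

lemma nonzero_row_set_in_vpart_set:
  assumes E: "E \<in> exp_mats n d" and inj: "inj_on E {..<n}"
  shows "nonzero_row_set n E \<in> vpart_set n d"
proof -
  have card: "card (E ` {..<n}) = n"
    using card_image[OF inj] by simp
  have "card (nonzero_row_set n E) = n \<or> card (nonzero_row_set n E) + 1 = n"
  proof (cases "(\<lambda>_. 0::nat) \<in> E ` {..<n}")
    case True
    then have "n \<ge> 1"
      by auto
    with True card show ?thesis
      by (simp add: nonzero_row_set_def card_Diff_singleton)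
  next
    case False
    with card show ?thesis
      by (simp add: nonzero_row_set_def)
  qed
  moreover have "set_vsum (nonzero_row_set n E) \<in> vecs_deg n d"
    using colsum_in_vecs_deg[OF E] colsum_eq_set_vsum[OF inj] by simp
  ultimately show ?thesis
    using exp_mats_row_in_vecN[OF E] by (auto simp: vpart_set_def nonzero_row_set_def)
qed

lemma vpart_set_imp_nonzero_row_set:
  assumes S: "S \<in> vpart_set n d"
  obtains E where "E \<in> exp_mats n d" and "inj_on E {..<n}" and "nonzero_row_set n E = S"
proof -
  have "finite S" and zero_notin: "(\<lambda>_. 0::nat) \<notin> S"
    using S by (auto simp: vpart_set_def)
  obtain vs where vs: "set vs = S" "distinct vs"
    using finite_distinct_list[OF \<open>finite S\<close>] by blast
  define ws where "ws = (if length vs = n then vs else vs @ [\<lambda>_. 0])"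
  have len: "length ws = n"
    using S vs distinct_card[of vs] by (auto simp: ws_def vpart_set_def)
  have distinct: "distinct ws"
    using vs zero_notin by (auto simp: ws_def)
  have set: "set ws \<subseteq> vecN n"
    using S vs by (auto simp: ws_def vpart_set_def vecN_def)
  have nonzero: "set ws - {\<lambda>_. 0} = S"
    using vs zero_notin by (auto simp: ws_def)
  have image: "mat_of_rows n ws ` {..<n} = set ws"
    using mat_of_rows_row[OF _ set len] len by (auto simp: set_conv_nth image_def)
  have "mset_vsum (mset ws) = set_vsum S"
    using mset_vsum_filter_nonzero[of "mset ws"] distinct nonzero \<open>finite S\<close>
    by (simp add: mset_set_set[symmetric] set_diff_eq mset_vsum_def set_vsum_def sum_unfold_sum_mset)
  then have "mat_of_rows n ws \<in> exp_mats n d"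
    using S by (intro mat_of_rows_in_exp_mats[OF set len]) (simp add: vpart_set_def)
  moreover have "inj_on (mat_of_rows n ws) {..<n}"
    using mat_of_rows_row[OF _ set len] distinct len by (auto simp: inj_on_def nth_eq_iff_index_eq)
  moreover have "nonzero_row_set n (mat_of_rows n ws) = S"
    using image nonzero by (simp add: nonzero_row_set_def)
  ultimately show ?thesis
    by (rule that)
qed

lemma vpart_set_eq_image_nonzero_row_set:
  "vpart_set n d = nonzero_row_set n ` {E \<in> exp_mats n d. inj_on E {..<n}}"
  using nonzero_row_set_in_vpart_set vpart_set_imp_nonzero_row_set by blast

lemma finite_vpart_set: "finite (vpart_set n d)"
  by (simp add: vpart_set_eq_image_nonzero_row_set finite_exp_mats)

definition signed_orbit :: "nat \<Rightarrow> (nat \<Rightarrow> nat \<Rightarrow> nat) \<Rightarrow> (nat \<Rightarrow> nat \<Rightarrow> nat) \<Rightarrow> complex" where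
  "signed_orbit n F E = (\<Sum>\<tau> | \<tau> permutes {..<n} \<and> F \<circ> \<tau> = E. of_int (sign \<tau>))"

lemma signed_orbit_comp_permutes:
  assumes \<sigma>: "\<sigma> permutes {..<n}"
  shows "signed_orbit n F (E \<circ> \<sigma>) = of_int (sign \<sigma>) * signed_orbit n F E"
proof -
  let ?T = "{\<tau>. \<tau> permutes {..<n} \<and> F \<circ> \<tau> = E}"
  have "bij_betw (\<lambda>\<tau>. \<tau> \<circ> \<sigma>) ?T {\<tau>. \<tau> permutes {..<n} \<and> F \<circ> \<tau> = E \<circ> \<sigma>}"
  proof (rule bij_betw_byWitness[where f' = "\<lambda>\<tau>. \<tau> \<circ> inv \<sigma>"])
    show "\<forall>\<tau>\<in>?T. \<tau> \<circ> \<sigma> \<circ> inv \<sigma> = \<tau>" and "\<forall>\<tau>\<in>{\<tau>. \<tau> permutes {..<n} \<and> F \<circ> \<tau> = E \<circ> \<sigma>}. \<tau> \<circ> inv \<sigma> \<circ> \<sigma> = \<tau>"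
      by (simp_all add: o_assoc[symmetric] permutes_inv_o[OF \<sigma>])
    show "(\<lambda>\<tau>. \<tau> \<circ> \<sigma>) ` ?T \<subseteq> {\<tau>. \<tau> permutes {..<n} \<and> F \<circ> \<tau> = E \<circ> \<sigma>}"
      using \<sigma> by (auto simp: o_assoc intro: permutes_compose)
    show "(\<lambda>\<tau>. \<tau> \<circ> inv \<sigma>) ` {\<tau>. \<tau> permutes {..<n} \<and> F \<circ> \<tau> = E \<circ> \<sigma>} \<subseteq> ?T"
    proof clarify
      fix \<tau> assume \<tau>: "\<tau> permutes {..<n}" and "F \<circ> \<tau> = E \<circ> \<sigma>"
      then have "F \<circ> (\<tau> \<circ> inv \<sigma>) = E \<circ> (\<sigma> \<circ> inv \<sigma>)"
        by (simp add: o_assoc)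
      then show "\<tau> \<circ> inv \<sigma> permutes {..<n} \<and> F \<circ> (\<tau> \<circ> inv \<sigma>) = E"
        using permutes_compose[OF permutes_inv[OF \<sigma>] \<tau>] by (simp add: permutes_inv_o[OF \<sigma>])
    qed
  qed
  then have "signed_orbit n F (E \<circ> \<sigma>) = (\<Sum>\<tau>\<in>?T. of_int (sign (\<tau> \<circ> \<sigma>)))"
    unfolding signed_orbit_def by (rule sum.reindex_bij_betw[symmetric])
  also have "\<dots> = (\<Sum>\<tau>\<in>?T. of_int (sign \<sigma>) * of_int (sign \<tau>))"
    using \<sigma> by (intro sum.cong refl)
      (auto simp: sign_compose permutes_imp_permutation[where S = "{..<n}"])
  finally show ?thesis
    by (simp add: signed_orbit_def sum_distrib_left)
qed

lemma row_covariant_signed_orbit: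
  "row_covariant n d (\<lambda>\<sigma>. of_int (sign \<sigma>)) (signed_orbit n F)"
  by (simp add: row_covariant_def signed_orbit_comp_permutes)

lemma signed_orbit_self:
  assumes inj: "inj_on F {..<n}"
  shows "signed_orbit n F F = 1"
proof -
  have "\<tau> = id" if \<tau>: "\<tau> permutes {..<n}" and "F \<circ> \<tau> = F" for \<tau>
  proof
    fix k show "\<tau> k = id k"
    proof (cases "k < n")
      case True
      then have "F (\<tau> k) = F k" and "\<tau> k < n"
        using \<open>F \<circ> \<tau> = F\<close> permutes_in_image[OF \<tau>] by (auto simp: fun_eq_iff)
      with True inj show ?thesis
        by (auto dest: inj_onD)
    next
      case False
      then show ?thesis
        using permutes_not_in[OF \<tau>] by simp
    qed
  qed
  then have "{\<tau>. \<tau> permutes {..<n} \<and> F \<circ> \<tau> = F} = {id}"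
    using permutes_id by auto
  then show ?thesis
    by (simp add: signed_orbit_def)
qed

lemma signed_orbit_nonzero_imp_permutes:
  assumes "signed_orbit n F E \<noteq> 0"
  obtains \<tau> where "\<tau> permutes {..<n}" and "E = F \<circ> \<tau>"
  using assms unfolding signed_orbit_def by (metis (mono_tags, lifting) empty_Collect_eq sum.empty)

lemma row_covariant_sign_not_inj:
  assumes a: "row_covariant n d (\<lambda>\<sigma>. of_int (sign \<sigma>)) a"
    and E: "E \<in> exp_mats n d" and not_inj: "\<not> inj_on E {..<n}"
  shows "a E = 0"
proof -
  obtain i j where ij: "i < n" "j < n" "i \<noteq> j" "E i = E j"
    using not_inj by (auto simp: inj_on_def)
  let ?\<tau> = "Transposition.transpose i j"
  have \<tau>: "?\<tau> permutes {..<n}"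
    using ij by (intro permutes_swap_id) auto
  have "E \<circ> ?\<tau> = E"
    using ij by (auto simp: fun_eq_iff transpose_def)
  moreover have "a (E \<circ> ?\<tau>) = of_int (sign ?\<tau>) * a E"
    using a E \<tau> by (simp add: row_covariant_def)
  ultimately have "a E = - a E"
    using ij(3) by (simp add: sign_swap_id)
  then show ?thesis
    by simp
qed

lemma sign_inv_permutes:
  fixes n :: nat
  assumes "\<sigma> permutes {..<n}"
  shows "(of_int (sign (inv \<sigma>)) :: complex) = of_int (sign \<sigma>)"
proof -
  have "permutation \<sigma>"
    using permutes_imp_permutation[OF finite_lessThan assms] .
  then show ?thesis
    by (simp add: sign_inverse)
qed

lemma signed_orbit_support:
  assumes "inj_on F {..<n}" and "signed_orbit n F E \<noteq> 0"
  shows "inj_on E {..<n} \<and> nonzero_row_set n E = nonzero_row_set n F \<and> colsum n E = colsum n F"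
proof -
  obtain \<tau> where \<tau>: "\<tau> permutes {..<n}" and E_eq: "E = F \<circ> \<tau>"
    using assms(2) by (rule signed_orbit_nonzero_imp_permutes)
  have "inj_on (F \<circ> \<tau>) {..<n}"
    using assms(1) inj_on_comp_permutes_iff[OF \<tau>] by blast
  then show ?thesis
    using nonzero_row_set_comp_permutes[OF \<tau>] colsum_comp_permutes[OF \<tau>] by (simp add: E_eq)
qed

lemma sign_covariant_coeff_expansion:
  assumes e: "\<And>S. S \<in> vpart_set n d \<Longrightarrow>
      e S \<in> exp_mats n d \<and> inj_on (e S) {..<n} \<and> nonzero_row_set n (e S) = S"
    and a: "row_covariant n d (\<lambda>\<sigma>. of_int (sign \<sigma>)) a" and E: "E \<in> exp_mats n d"
  shows "a E = (\<Sum>S\<in>vpart_set n d. a (e S) * signed_orbit n (e S) E)"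
proof (cases "inj_on E {..<n}")
  case True
  define S where "S = nonzero_row_set n E"
  have S: "S \<in> vpart_set n d"
    using E True by (auto simp: S_def vpart_set_eq_image_nonzero_row_set)
  have "nonzero_rows n (e S) = nonzero_rows n E"
    using e[OF S] True by (simp add: S_def nonzero_rows_eq_mset_set)
  then obtain \<tau> where \<tau>: "\<tau> permutes {..<n}" and E_eq: "E = e S \<circ> \<tau>"
    using e[OF S] E by (metis nonzero_rows_eq_imp_permutes)
  have "signed_orbit n (e S') E = 0" if "S' \<in> vpart_set n d" "S' \<noteq> S" for S'
    using signed_orbit_support[of "e S'" n E] e[OF that(1)] that(2) by (auto simp: S_def)
  then have "(\<Sum>S'\<in>vpart_set n d. a (e S') * signed_orbit n (e S') E)
      = (\<Sum>S'\<in>vpart_set n d. if S' = S then a (e S) * signed_orbit n (e S) E else 0)"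
    by (intro sum.cong refl) auto
  also have "\<dots> = a (e S) * signed_orbit n (e S) E"
    using S finite_vpart_set by simp
  also have "\<dots> = a E"
    using e[OF S] a \<tau>
    by (simp add: E_eq signed_orbit_comp_permutes signed_orbit_self row_covariant_def mult.commute)
  finally show ?thesis ..
next
  case False
  then have "signed_orbit n (e S) E = 0" if "S \<in> vpart_set n d" for S
    using signed_orbit_support[of "e S" n E] e[OF that] by blast
  then show ?thesis
    using row_covariant_sign_not_inj[OF a E False] by simp
qed

lemma ch_Ind_sign:
  "ch n (Ind n d (\<lambda>\<sigma>. of_int (sign \<sigma>))) t = (\<Sum>S\<in>vpart_set n d. tpow n t (set_vsum S))"
proof -
  define e where "e S = (SOME E. E \<in> exp_mats n d \<and> inj_on E {..<n} \<and> nonzero_row_set n E = S)" for S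
  have e: "e S \<in> exp_mats n d \<and> inj_on (e S) {..<n} \<and> nonzero_row_set n (e S) = S"
    if "S \<in> vpart_set n d" for S
  proof -
    have "\<exists>E. E \<in> exp_mats n d \<and> inj_on E {..<n} \<and> nonzero_row_set n E = S"
      using that by (auto simp: vpart_set_eq_image_nonzero_row_set)
    then show ?thesis
      unfolding e_def by (rule someI_ex)
  qed
  show ?thesis
  proof (rule ch_Ind_eq_sum_eigenvalues[where e = e and b = "\<lambda>S. signed_orbit n (e S)"])
    show "finite (vpart_set n d)"
      by (rule finite_vpart_set)
    show "e S \<in> exp_mats n d" if "S \<in> vpart_set n d" for S
      using e[OF that] by blast
    show "signed_orbit n (e S) (e S') = (if S = S' then 1 else 0)"
      if "S \<in> vpart_set n d" "S' \<in> vpart_set n d" for S S'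
      using e[OF that(1)] e[OF that(2)] signed_orbit_support[of "e S" n "e S'"]
      by (auto simp: signed_orbit_self)
    show "row_covariant n d (\<lambda>\<sigma>. of_int (sign \<sigma>)) (signed_orbit n (e S))" for S
      by (rule row_covariant_signed_orbit)
    show "tpow n t (colsum n E) = tpow n t (set_vsum S)"
      if "S \<in> vpart_set n d" "signed_orbit n (e S) E \<noteq> 0" for S E
      using e[OF that(1)] signed_orbit_support[OF _ that(2)] colsum_eq_set_vsum by metis
    show "a E = (\<Sum>S\<in>vpart_set n d. a (e S) * signed_orbit n (e S) E)"
      if "row_covariant n d (\<lambda>\<sigma>. of_int (sign \<sigma>)) a" "E \<in> exp_mats n d" for a E
      using e that by (rule sign_covariant_coeff_expansion)
  qed (rule sign_inv_permutes)
qed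

section \<open>Counting vector partitions\<close>

lemma sum_comp_eq_sum_card_fibres:
  assumes "finite A" and "finite B" and "g ` A \<subseteq> B"
  shows "(\<Sum>a\<in>A. f (g a)) = (\<Sum>b\<in>B. of_nat (card {a\<in>A. g a = b}) * f b)"
proof -
  have "(\<Sum>a\<in>A. f (g a)) = (\<Sum>b\<in>B. \<Sum>a\<in>{a\<in>A. g a = b}. f (g a))"
    by (rule sum.group[OF assms, symmetric])
  also have "\<dots> = (\<Sum>b\<in>B. \<Sum>a\<in>{a\<in>A. g a = b}. f b)"
    by (intro sum.cong refl) auto
  also have "\<dots> = (\<Sum>b\<in>B. of_nat (card {a\<in>A. g a = b}) * f b)"
    by simp
  finally show ?thesis .
qed

lemma finite_vecs_deg: "finite (vecs_deg n d)"
proof -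
  let ?extend = "\<lambda>f i. if i < n then f i else (0::nat)"
  have "vecs_deg n d \<subseteq> ?extend ` ({..<n} \<rightarrow>\<^sub>E {..d})"
  proof
    fix x assume x: "x \<in> vecs_deg n d"
    have "x i \<le> d" if "i < n" for i
      using x member_le_sum[of i "{..<n}" x] that by (simp add: vecs_deg_def)
    then have "restrict x {..<n} \<in> {..<n} \<rightarrow>\<^sub>E {..d}"
      by auto
    moreover have "x = ?extend (restrict x {..<n})"
      using x by (auto simp: vecs_deg_def vecN_def fun_eq_iff)
    ultimately show "x \<in> ?extend ` ({..<n} \<rightarrow>\<^sub>E {..d})"
      by blast
  qed
  then show ?thesis
    by (rule finite_subset) (auto intro!: finite_imageI finite_PiE)
qed

lemma sum_vpart_mset_eq_pk:
  "(\<Sum>M\<in>vpart_mset n d. tpow n t (mset_vsum M)) = (\<Sum>x\<in>vecs_deg n d. of_nat (pk n n x) * tpow n t x)"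
proof -
  have fibre_card: "card {M \<in> vpart_mset n d. mset_vsum M = x} = pk n n x" if "x \<in> vecs_deg n d" for x
  proof -
    have "{M \<in> vpart_mset n d. mset_vsum M = x} = {M. (\<forall>v\<in>#M. v \<in> vecN n \<and> v \<noteq> (\<lambda>_. 0)) \<and>
        (\<lambda>i. \<Sum>v\<in>#M. v i) = x \<and> size M \<le> n}"
      using that by (auto simp: vpart_mset_def mset_vsum_def)
    then show ?thesis
      by (simp add: pk_def)
  qed
  have "(\<Sum>M\<in>vpart_mset n d. tpow n t (mset_vsum M))
      = (\<Sum>x\<in>vecs_deg n d. of_nat (card {M \<in> vpart_mset n d. mset_vsum M = x}) * tpow n t x)"
    by (rule sum_comp_eq_sum_card_fibres[OF finite_vpart_mset finite_vecs_deg]) (auto simp: vpart_mset_def)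
  also have "\<dots> = (\<Sum>x\<in>vecs_deg n d. of_nat (pk n n x) * tpow n t x)"
    using fibre_card by simp
  finally show ?thesis .
qed

lemma sum_vpart_set_eq_qk:
  "(\<Sum>S\<in>vpart_set n d. tpow n t (set_vsum S)) = (\<Sum>x\<in>vecs_deg n d. of_nat (qk n n x) * tpow n t x)"
proof -
  have fibre_card: "card {S \<in> vpart_set n d. set_vsum S = x} = qk n n x" if "x \<in> vecs_deg n d" for x
  proof -
    have "{S \<in> vpart_set n d. set_vsum S = x} = {S. finite S \<and> (\<forall>v\<in>S. v \<in> vecN n \<and> v \<noteq> (\<lambda>_. 0)) \<and>
        (\<lambda>i. \<Sum>v\<in>S. v i) = x \<and> (card S = n \<or> card S + 1 = n)}"
      using that by (auto simp: vpart_set_def set_vsum_def)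
    then show ?thesis
      by (simp add: qk_def)
  qed
  have "(\<Sum>S\<in>vpart_set n d. tpow n t (set_vsum S))
      = (\<Sum>x\<in>vecs_deg n d. of_nat (card {S \<in> vpart_set n d. set_vsum S = x}) * tpow n t x)"
    by (rule sum_comp_eq_sum_card_fibres[OF finite_vpart_set finite_vecs_deg]) (auto simp: vpart_set_def)
  also have "\<dots> = (\<Sum>x\<in>vecs_deg n d. of_nat (qk n n x) * tpow n t x)"
    using fibre_card by simp
  finally show ?thesis .
qed

theorem lemma4:
  fixes n d :: nat and t :: "nat \<Rightarrow> complex"
  assumes "n \<ge> 1"
  shows "ch n (Ind n d (\<lambda>\<sigma>. 1)) t = (\<Sum>x\<in>vecs_deg n d. of_nat (pk n n x) * tpow n t x)
         \<and> ch n (Ind n d (\<lambda>\<sigma>. of_int (sign \<sigma>))) t = (\<Sum>x\<in>vecs_deg n d. of_nat (qk n n x) * tpow n t x)"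
  using ch_Ind_trivial ch_Ind_sign sum_vpart_mset_eq_pk sum_vpart_set_eq_qk by simp

end
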